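(* Let $\mu$ be a partition of $n$, let $T$ be a row-strict filling of $\mu$, and write $\Phi(T)=x_2^{\alpha_2}\cdots x_n^{\alpha_n}$. For each $i\in\{2,\dots,n\}$, the shape $\mu^{(i)}$ of the subfilling $T^{(i)}$ has at least $\alpha_i+1$ nonzero rows.
   Context: A partition $\mu=(\mu_1\ge\cdots\ge\mu_s>0)$ of $n$ is drawn as a Young diagram with $\mu_k$ boxes in row $k$ (rows top to bottom, left-justified). A filling places $1,\dots,n$ bijectively in the boxes; it is row-strict if entries increase left to right along rows. $T^{(i)}$ is obtained from $T$ by deleting the boxes containing $i+1,\dots,n$; its shape is $\mu^{(i)}$. Dimension pairs (with $h(j)=j$): $(a,b)$ is a dimension pair of $T$ if (1) $b>a$; (2) $b$ is in the same column as $a$ strictly below it, or in a column strictly left of $a$'s column; (3) if a box immediately right of $a$ exists and contains $c$, then $b\le c$. $D^T_j$ is the set of dimension pairs $(a,j)$, and $\Phi(T)=\prod_{j=2}^n x_j^{|D^T_j|}\in\mathbb{Z}[x_1,\dots,x_n]$. *)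

theory Defs
  imports Main
begin

text \<open>A partition mu = (mu_1 >= ... >= mu_s > 0) is a list of positive, weakly
decreasing naturals. Boxes are 0-indexed pairs (row, column): row k has
mu!k boxes, rows top to bottom, columns left to right.\<close>

definition is_partition :: "nat list \<Rightarrow> nat \<Rightarrow> bool" where
  "is_partition mu n \<longleftrightarrow> sorted (rev mu) \<and> (\<forall>k\<in>set mu. 0 < k) \<and> sum_list mu = n"

definition boxes :: "nat list \<Rightarrow> (nat \<times> nat) set" where
  "boxes mu = {(r, c). r < length mu \<and> c < mu ! r}"

definition is_filling :: "nat list \<Rightarrow> nat \<Rightarrow> (nat \<times> nat \<Rightarrow> nat) \<Rightarrow> bool" where
  "is_filling mu n T \<longleftrightarrow> bij_betw T (boxes mu) {1..n}"

definition row_strict :: "nat list \<Rightarrow> (nat \<times> nat \<Rightarrow> nat) \<Rightarrow> bool" where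
  "row_strict mu T \<longleftrightarrow>
     (\<forall>r c c'. (r, c) \<in> boxes mu \<longrightarrow> (r, c') \<in> boxes mu \<longrightarrow> c < c' \<longrightarrow> T (r, c) < T (r, c'))"

text \<open>Dimension pairs (with h(j) = j).\<close>
definition dim_pair :: "nat list \<Rightarrow> (nat \<times> nat \<Rightarrow> nat) \<Rightarrow> nat \<Rightarrow> nat \<Rightarrow> bool" where
  "dim_pair mu T a b \<longleftrightarrow>
     b > a \<and>
     (\<exists>ra ca rb cb. (ra, ca) \<in> boxes mu \<and> (rb, cb) \<in> boxes mu \<and>
        T (ra, ca) = a \<and> T (rb, cb) = b \<and>
        ((cb = ca \<and> rb > ra) \<or> cb < ca) \<and>
        ((ra, Suc ca) \<in> boxes mu \<longrightarrow> b \<le> T (ra, Suc ca)))"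

definition D_set :: "nat list \<Rightarrow> (nat \<times> nat \<Rightarrow> nat) \<Rightarrow> nat \<Rightarrow> (nat \<times> nat) set" where
  "D_set mu T j = {(a, j) | a. dim_pair mu T a j}"

text \<open>The monomial Phi(T) = prod_{j=2}^n x_j^{|D_j|}, represented by its exponent
vector: Phi_exp mu n T j is the exponent of x_j in Phi(T).\<close>
definition Phi_exp :: "nat list \<Rightarrow> nat \<Rightarrow> (nat \<times> nat \<Rightarrow> nat) \<Rightarrow> nat \<Rightarrow> nat" where
  "Phi_exp mu n T j = (if 2 \<le> j \<and> j \<le> n then card (D_set mu T j) else 0)"

definition sub_boxes :: "nat list \<Rightarrow> (nat \<times> nat \<Rightarrow> nat) \<Rightarrow> nat \<Rightarrow> (nat \<times> nat) set" where
  "sub_boxes mu T i = {p \<in> boxes mu. T p \<le> i}"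

definition nonzero_rows_sub :: "nat list \<Rightarrow> (nat \<times> nat \<Rightarrow> nat) \<Rightarrow> nat \<Rightarrow> nat" where
  "nonzero_rows_sub mu T i = card (fst ` sub_boxes mu T i)"

end

theory Submission
  imports Defs
begin

text \<open>
  Fix an entry j, sitting in the box q of the filling T.  Every dimension pair (a, j) comes
  from a box p of T holding a < j in a row other than that of q (a box of j's own row to the
  right of q would hold a larger entry), and the right neighbour of p, if any, holds an entry
  at least j.  We call such boxes j-sources.  In a row-strict filling a row contains at most
  one j-source: of two of them, the left one's right neighbour would lie weakly left of the
  right one and so hold an entry below j.  Hence a \<mapsto> (row of the box of a) maps the
  dimension pairs (a, j) injectively into the rows of T^(j) other than the row of q, which
  is itself a row of T^(j).  This gives |D_j| + 1 \<le> number of nonzero rows of the shape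
  of T^(j); only injectivity of T and row-strictness are used, the main theorem being the
  instance j = i for a row-strict filling.
\<close>

lemma finite_boxes: "finite (boxes mu)"
proof (rule finite_subset)
  show "boxes mu \<subseteq> {..<length mu} \<times> {..<Max (insert 0 (set mu))}"
  proof
    fix p assume "p \<in> boxes mu"
    then obtain r c where p: "p = (r, c)" "r < length mu" "c < mu ! r"
      by (auto simp: boxes_def)
    then have "mu ! r \<le> Max (insert 0 (set mu))" by simp
    with p have "c < Max (insert 0 (set mu))" by linarith
    with p show "p \<in> {..<length mu} \<times> {..<Max (insert 0 (set mu))}" by auto
  qed
qed simp

text \<open>A j-source: a box holding an entry below j whose right neighbour (if it exists)
  holds an entry at least j.  These are the boxes that can give a dimension pair (a, j).\<close>
definition source :: "nat list \<Rightarrow> (nat \<times> nat \<Rightarrow> nat) \<Rightarrow> nat \<Rightarrow> nat \<times> nat \<Rightarrow> bool" where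
  "source mu T j p \<longleftrightarrow> p \<in> boxes mu \<and> T p < j \<and>
     ((fst p, Suc (snd p)) \<in> boxes mu \<longrightarrow> j \<le> T (fst p, Suc (snd p)))"

text \<open>In a row-strict filling no j-source lies strictly left of another j-source of the
  same row: the right neighbour of the left one would hold an entry both \<ge> j and < j.\<close>
lemma source_not_left_of_source:
  assumes rs: "row_strict mu T"
    and p: "source mu T j (r, c)" and p': "source mu T j (r, c')"
  shows "\<not> c < c'"
proof
  assume "c < c'"
  then have next_box: "(r, Suc c) \<in> boxes mu"
    using p' by (auto simp: source_def boxes_def)
  with p have "j \<le> T (r, Suc c)" by (simp add: source_def)
  moreover have "T (r, Suc c) \<le> T (r, c')"
  proof (cases "Suc c = c'")
    case False
    with \<open>c < c'\<close> have "Suc c < c'" by simp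
    with rs next_box p' show ?thesis
      by (auto simp: row_strict_def source_def intro: less_imp_le)
  qed simp
  ultimately show False using p' by (simp add: source_def)
qed

lemma inj_on_row_sources:
  assumes "row_strict mu T"
  shows "inj_on fst {p. source mu T j p}"
proof (rule inj_onI)
  fix p p' assume "p \<in> {p. source mu T j p}" "p' \<in> {p. source mu T j p}" "fst p = fst p'"
  then obtain r c c' where "p = (r, c)" "p' = (r, c')"
    "source mu T j (r, c)" "source mu T j (r, c')"
    by (cases p, cases p') auto
  with source_not_left_of_source[OF assms] show "p = p'"
    by (metis linorder_neqE_nat)
qed

lemma dim_pair_source:
  assumes inj: "inj_on T (boxes mu)" and rs: "row_strict mu T"
    and q: "q \<in> boxes mu" "T q = j"
    and p: "p \<in> boxes mu" "dim_pair mu T (T p) j"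
  shows "source mu T j p \<and> fst p \<noteq> fst q"
proof -
  from p(2) obtain ra ca rb cb where d: "T p < j" "(ra, ca) \<in> boxes mu" "(rb, cb) \<in> boxes mu"
      "T (ra, ca) = T p" "T (rb, cb) = j" "(cb = ca \<and> ra < rb) \<or> cb < ca"
      "(ra, Suc ca) \<in> boxes mu \<longrightarrow> j \<le> T (ra, Suc ca)"
    unfolding dim_pair_def by blast
  have "p = (ra, ca)" using inj_onD[OF inj d(4)[symmetric] p(1) d(2)] .
  moreover have "q = (rb, cb)" using inj_onD[OF inj _ q(1) d(3)] q(2) d(5) by simp
  moreover have "ra \<noteq> rb"
  proof
    assume "ra = rb"
    with d(6) have "cb < ca" by auto
    with rs d(2,3) \<open>ra = rb\<close> have "T (rb, cb) < T (ra, ca)"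
      unfolding row_strict_def by blast
    with d(1,4,5) show False by simp
  qed
  ultimately show ?thesis using d(1,2,7) by (simp add: source_def)
qed

lemma card_D_set_le_rows:
  assumes inj: "inj_on T (boxes mu)" and rs: "row_strict mu T"
    and q: "q \<in> boxes mu" "T q = j"
  shows "card (D_set mu T j) + 1 \<le> nonzero_rows_sub mu T j"
proof -
  define P where "P = {p \<in> boxes mu. dim_pair mu T (T p) j}"
  define R where "R = fst ` sub_boxes mu T j"
  have finite_R: "finite R"
    using finite_boxes by (simp add: R_def sub_boxes_def)
  have "{a. dim_pair mu T a j} = T ` P"
  proof
    show "{a. dim_pair mu T a j} \<subseteq> T ` P"
    proof
      fix a assume a: "a \<in> {a. dim_pair mu T a j}"
      then obtain p where "p \<in> boxes mu" "T p = a"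
        by (auto simp: dim_pair_def)
      with a show "a \<in> T ` P" by (auto simp: P_def)
    qed
  qed (auto simp: P_def)
  then have "card (D_set mu T j) = card (T ` P)"
    by (simp add: D_set_def card_image inj_on_def setcompr_eq_image)
  also have "\<dots> = card (fst ` P)"
  proof -
    have sources: "P \<subseteq> {p. source mu T j p}"
      using dim_pair_source[OF inj rs q] by (auto simp: P_def)
    have "inj_on T P" using inj by (rule inj_on_subset) (auto simp: P_def)
    moreover have "inj_on fst P"
      using inj_on_row_sources[OF rs] sources by (rule inj_on_subset)
    ultimately show ?thesis by (simp add: card_image)
  qed
  also have "\<dots> \<le> card (R - {fst q})"
  proof (rule card_mono)
    show "fst ` P \<subseteq> R - {fst q}"
      using dim_pair_source[OF inj rs q]
      by (force simp: P_def R_def sub_boxes_def source_def)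
  qed (simp add: finite_R)
  also have "\<dots> = card R - 1"
    using q by (simp add: R_def sub_boxes_def)
  finally have "card (D_set mu T j) \<le> card R - 1" .
  moreover have "fst q \<in> R"
    using q by (auto simp: R_def sub_boxes_def)
  then have "card R \<noteq> 0"
    using finite_R by auto
  ultimately show ?thesis
    by (simp add: nonzero_rows_sub_def R_def)
qed

theorem mainTheorem4:
  fixes mu :: "nat list" and n :: nat and T :: "nat \<times> nat \<Rightarrow> nat"
  assumes "is_partition mu n"
    and "is_filling mu n T"
    and "row_strict mu T"
  shows "\<forall>i\<in>{2..n}. nonzero_rows_sub mu T i \<ge> Phi_exp mu n T i + 1"
proof
  fix i assume i: "i \<in> {2..n}"
  have bij: "bij_betw T (boxes mu) {1..n}"
    using assms(2) by (simp add: is_filling_def)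
  then have "i \<in> T ` boxes mu"
    using i by (simp add: bij_betw_imp_surj_on)
  then obtain q where "q \<in> boxes mu" "T q = i" by blast
  with bij assms(3) have "card (D_set mu T i) + 1 \<le> nonzero_rows_sub mu T i"
    by (intro card_D_set_le_rows) (auto simp: bij_betw_def)
  with i show "nonzero_rows_sub mu T i \<ge> Phi_exp mu n T i + 1"
    by (simp add: Phi_exp_def)
qed

end
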